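(* Consider a single arc with affine delay function $D(x)=\alpha x+\beta$, $\alpha\ge0$, $\beta>0$, which is empty at time $t_0$. Let $u^{(n)},u\in L^2_+([t_0,t_f])$ (extended by zero outside $[t_0,t_f]$) be inflow rates with $\|u^{(n)}-u\|_{L^2([t_0,t_f])}\to 0$, with cumulative inflows $U^{(n)}(t)=\int_{t_0}^t u^{(n)}(s)\,ds$, $U(t)=\int_{t_0}^t u(s)\,ds$. Let $\tau^{(n)},\tau$ be the corresponding exit time functions and $V^{(n)},V$ the corresponding cumulative exit counts, as defined in the context. Then $U^{(n)}\to U$, $\tau^{(n)}\to\tau$ and $V^{(n)}\to V$ uniformly on $[t_0,t_f]$.
   Context: For a cumulative inflow $U$ on a single arc that is empty at $t_0$ (and receives no vehicles before $t_0$), the arc volume is $X(t)=U(t)-V(t)$, where $V(t)$ is the cumulative number of vehicles that have exited by time $t$; the exit time of a vehicle entering at time $t$ is $\tau(t)=t+\alpha X(t)+\beta$ (with $\tau(t)=t+\beta$ for $t<t_0$), and first-in-first-out propagation gives $V(\tau(t))=U(t)$. With affine delay and $\beta>0$, $\tau$ is continuous and strictly increasing, so $V(t)=U(\tau^{-1}(t))$ for $t\ge\tau(t_0)$ and $V(t)=0$ for $t<\tau(t_0)$; in particular $\tau(t)=t+\alpha\big[U(t)-U(\tau^{-1}(t))\big]+\beta$ whenever $t\ge \tau(t_0)$, and $\tau(t)=t+\alpha U(t)+\beta$ for $t_0\le t\le \tau(t_0)$. *)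

theory Defs
  imports "HOL-Analysis.Analysis"
begin

text \<open>Outside [t0,tf] it is regarded as zero
  (this is built into the cumulative inflow below).\<close>
definition L2_plus :: "real \<Rightarrow> real \<Rightarrow> (real \<Rightarrow> real) \<Rightarrow> bool" where
  "L2_plus t0 tf u \<longleftrightarrow>
     set_borel_measurable lborel {t0..tf} u \<and>
     set_integrable lborel {t0..tf} (\<lambda>s. (u s)\<^sup>2) \<and>
     (AE s in lborel. s \<in> {t0..tf} \<longrightarrow> u s \<ge> 0)"

definition L2_dist :: "real \<Rightarrow> real \<Rightarrow> (real \<Rightarrow> real) \<Rightarrow> (real \<Rightarrow> real) \<Rightarrow> real" where
  "L2_dist t0 tf f g = sqrt (LINT s:{t0..tf}|lborel. (f s - g s)\<^sup>2)"

definition cum_inflow :: "real \<Rightarrow> real \<Rightarrow> (real \<Rightarrow> real) \<Rightarrow> real \<Rightarrow> real" where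
  "cum_inflow t0 tf u t = (LINT s:({t0..t} \<inter> {t0..tf})|lborel. u s)"

text \<open>Arc dynamics with affine delay D(x) = alpha x + beta for cumulative inflow U,
  empty at t0: tau is the exit time function, V the cumulative exit count,
  X = U - V the arc volume. tau is continuous and strictly increasing (as stated in the context).\<close>
definition arc_dynamics ::
  "real \<Rightarrow> real \<Rightarrow> real \<Rightarrow> (real \<Rightarrow> real) \<Rightarrow> (real \<Rightarrow> real) \<Rightarrow> (real \<Rightarrow> real) \<Rightarrow> bool" where
  "arc_dynamics \<alpha> \<beta> t0 U \<tau> V \<longleftrightarrow>
     (\<forall>t. t < t0 \<longrightarrow> \<tau> t = t + \<beta>) \<and>
     (\<forall>t. t \<ge> t0 \<longrightarrow> \<tau> t = t + \<alpha> * (U t - V t) + \<beta>) \<and>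
     (\<forall>t. V (\<tau> t) = U t) \<and>
     (\<forall>t. t < \<tau> t0 \<longrightarrow> V t = 0) \<and>
     continuous_on UNIV \<tau> \<and> strict_mono \<tau>"

end

theory Submission
  imports Defs
begin

(* Young's inequality |y| <= y^2/(2l) + l/2 yields, for every
       square-integrable f and l > 0, the bound |int_S f| <= ||f||^2/(2l) + l/2 |S|. With
       f = u it shows that U is uniformly continuous; with f = u_n - u and l small it shows
       that U_n -> U uniformly on the whole real line.
   (2) Exit times. From the arc dynamics alone, tau(t) > t and tau is onto, and for a
       nondecreasing U even tau(t) >= t + beta. An abstract lemma on strictly increasing
       functions: if tau_n -> tau uniformly on (-inf,T] with tau continuous, then the
       solutions s' of tau_n(s') = tau(s) converge to s uniformly.
   (3) Propagation. Uniform convergence of exit times on (-inf,T] yields uniform convergence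
       of V(t) = U(tau^-1(t)) on [t0,T+beta], hence of tau = t + alpha (U - V) + beta on
       (-inf,T+beta]. Starting from tau(t) = t + beta before t0, induction on the number of
       delay steps beta covers [t0,tf], which gives the theorem. *)

lemma emeasure_subset_Icc_finite:
  assumes "S \<subseteq> {a..b::real}"
  shows "emeasure lborel S < \<infinity>"
  by (metis assms emeasure_lborel_Icc_eq emeasure_mono ennreal_less_top infinity_ennreal_def
      order_le_less_trans sets_lborel atLeastAtMost_borel)

lemma measure_subset_Icc_le:
  assumes "S \<in> sets lborel" "S \<subseteq> {a..b::real}" "a \<le> b"
  shows "measure lborel S \<le> b - a"
proof -
  have "measure lborel S \<le> measure lborel {a..b}"
    using assms emeasure_subset_Icc_finite[of "{a..b}" a b]
    by (intro measure_mono_fmeasurable) (auto simp: fmeasurable_def)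
  then show ?thesis using assms(3) by simp
qed

lemma set_integrable_const_bounded:
  assumes "S \<in> sets lborel" "S \<subseteq> {a..b::real}"
  shows "set_integrable lborel S (\<lambda>_. c::real)"
  unfolding set_integrable_def
  using assms emeasure_subset_Icc_finite[OF assms(2)] by (simp add: integrable_real_mult_indicator)

lemma square_integrable_imp_integrable:
  fixes f :: "real \<Rightarrow> real"
  assumes meas: "set_borel_measurable lborel {a..b} f"
    and sq: "set_integrable lborel {a..b} (\<lambda>s. (f s)\<^sup>2)"
  shows "set_integrable lborel {a..b} f"
proof -
  have "set_integrable lborel {a..b} (\<lambda>s. (f s)\<^sup>2 + 1)"
    using sq set_integrable_const_bounded[of "{a..b}" a b] by auto
  moreover have "\<bar>f s\<bar> \<le> (f s)\<^sup>2 + 1" for s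
    using sum_squares_ge_zero[of "\<bar>f s\<bar> - 1" 0] by (simp add: power2_eq_square algebra_simps)
  ultimately show ?thesis
    by (intro set_integrable_bound[OF _ meas]) auto
qed

lemma set_borel_measurable_diff_power2:
  fixes f g :: "real \<Rightarrow> real"
  assumes "set_borel_measurable lborel A f" "set_borel_measurable lborel A g"
  shows "set_borel_measurable lborel A (\<lambda>s. f s - g s)"
    and "set_borel_measurable lborel A (\<lambda>s. (f s - g s)\<^sup>2)"
proof -
  have "(\<lambda>x. indicator A x *\<^sub>R (f x - g x)) = (\<lambda>x. indicator A x *\<^sub>R f x - indicator A x *\<^sub>R g x)"
    by (simp add: algebra_simps)
  then show diff: "set_borel_measurable lborel A (\<lambda>s. f s - g s)"
    using assms unfolding set_borel_measurable_def by simp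
  have "(\<lambda>x. indicator A x *\<^sub>R (f x - g x)\<^sup>2) = (\<lambda>x. (indicator A x *\<^sub>R (f x - g x))\<^sup>2)"
    by (auto simp: indicator_def fun_eq_iff)
  then show "set_borel_measurable lborel A (\<lambda>s. (f s - g s)\<^sup>2)"
    using diff unfolding set_borel_measurable_def by simp
qed

lemma square_integrable_diff:
  fixes f g :: "real \<Rightarrow> real"
  assumes "set_borel_measurable lborel A f" "set_borel_measurable lborel A g"
    and "set_integrable lborel A (\<lambda>s. (f s)\<^sup>2)" "set_integrable lborel A (\<lambda>s. (g s)\<^sup>2)"
  shows "set_integrable lborel A (\<lambda>s. (f s - g s)\<^sup>2)"
proof -
  have "set_integrable lborel A (\<lambda>s. 2 * ((f s)\<^sup>2 + (g s)\<^sup>2))"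
    using assms(3,4) by auto
  moreover have "(f s - g s)\<^sup>2 \<le> 2 * ((f s)\<^sup>2 + (g s)\<^sup>2)" for s
    using sum_squares_ge_zero[of "f s + g s" 0] by (simp add: power2_eq_square algebra_simps)
  ultimately show ?thesis
    by (intro set_integrable_bound[OF _ set_borel_measurable_diff_power2(2)[OF assms(1,2)]])
      (auto intro!: AE_I2)
qed

lemma set_integral_nonneg_mono_set:
  fixes f :: "real \<Rightarrow> real"
  assumes "set_integrable lborel A f" "S \<in> sets lborel" "S \<subseteq> A" "\<And>s. f s \<ge> 0"
  shows "(LINT s:S|lborel. f s) \<le> (LINT s:A|lborel. f s)"
  using assms set_integrable_subset[OF assms(1-3)] unfolding set_lebesgue_integral_def set_integrable_def
  by (intro integral_mono) (auto simp: indicator_def)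

(* The basic L2 estimate of the proof: by Young's inequality |y| <= y^2/(2l) + l/2,
   for every l > 0 the integral of f over S is bounded by ||f||^2/(2l) + l/2 |S|. *)
lemma set_integral_young_bound:
  fixes f :: "real \<Rightarrow> real"
  assumes meas: "set_borel_measurable lborel {a..b} f"
    and sq: "set_integrable lborel {a..b} (\<lambda>s. (f s)\<^sup>2)"
    and S: "S \<in> sets lborel" "S \<subseteq> {a..b}" and l: "l > 0"
  shows "\<bar>LINT s:S|lborel. f s\<bar> \<le> (LINT s:{a..b}|lborel. (f s)\<^sup>2) / (2*l) + l/2 * measure lborel S"
proof -
  have fS: "set_integrable lborel S f"
    using set_integrable_subset[OF square_integrable_imp_integrable[OF meas sq] S] .
  have sqS: "set_integrable lborel S (\<lambda>s. (f s)\<^sup>2 / (2*l))"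
    using set_integrable_subset[OF sq S] by simp
  have cS: "set_integrable lborel S (\<lambda>_. l/2)"
    using set_integrable_const_bounded[OF S] .
  have young: "\<bar>y\<bar> \<le> y\<^sup>2 / (2*l) + l/2" for y :: real
  proof -
    have "2 * l * \<bar>y\<bar> \<le> y\<^sup>2 + l\<^sup>2"
      using sum_squares_ge_zero[of "\<bar>y\<bar> - l" 0] by (simp add: power2_eq_square algebra_simps)
    then show ?thesis using l by (simp add: field_simps power2_eq_square)
  qed
  have "\<bar>LINT s:S|lborel. f s\<bar> \<le> (LINT s:S|lborel. \<bar>f s\<bar>)"
    using set_integral_norm_bound[OF fS] by simp
  also have "\<dots> \<le> (LINT s:S|lborel. (f s)\<^sup>2 / (2*l) + l/2)"
    using set_integrable_abs[OF fS] sqS cS young by (intro set_integral_mono) auto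
  also have "\<dots> = (LINT s:S|lborel. (f s)\<^sup>2) / (2*l) + l/2 * measure lborel S"
    using S emeasure_subset_Icc_finite[OF S(2)]
    by (simp add: set_integral_add(2)[OF sqS cS] set_integral_const)
  also have "\<dots> \<le> (LINT s:{a..b}|lborel. (f s)\<^sup>2) / (2*l) + l/2 * measure lborel S"
    using set_integral_nonneg_mono_set[OF sq S] l by (simp add: divide_right_mono)
  finally show ?thesis .
qed

lemma L2_plus_integrable:
  assumes "L2_plus t0 tf u"
  shows "set_integrable lborel {t0..tf} u"
  using assms square_integrable_imp_integrable unfolding L2_plus_def by blast

lemma cum_inflow_increment:
  assumes u: "L2_plus t0 tf u" and xy: "x \<le> y"
  shows "cum_inflow t0 tf u y - cum_inflow t0 tf u x = (LINT s:({x<..y} \<inter> {t0..tf})|lborel. u s)"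
proof -
  have split: "{t0..y} \<inter> {t0..tf} = ({t0..x} \<inter> {t0..tf}) \<union> ({x<..y} \<inter> {t0..tf})"
    using xy by auto
  have "set_integrable lborel ({t0..x} \<inter> {t0..tf}) u" "set_integrable lborel ({x<..y} \<inter> {t0..tf}) u"
    by (rule set_integrable_subset[OF L2_plus_integrable[OF u]]; auto)+
  then have "cum_inflow t0 tf u y = cum_inflow t0 tf u x + (LINT s:({x<..y} \<inter> {t0..tf})|lborel. u s)"
    unfolding cum_inflow_def by (subst split, intro set_integral_Un) auto
  then show ?thesis by simp
qed

lemma cum_inflow_mono:
  assumes u: "L2_plus t0 tf u"
  shows "mono (cum_inflow t0 tf u)"
proof (rule monoI)
  fix x y :: real assume xy: "x \<le> y"
  have nonneg: "AE s in lborel. s \<in> {t0..tf} \<longrightarrow> u s \<ge> 0"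
    using u unfolding L2_plus_def by blast
  have "0 \<le> (LINT s:({x<..y} \<inter> {t0..tf})|lborel. u s)"
    using nonneg unfolding set_lebesgue_integral_def
    by (intro integral_nonneg_AE) (auto simp: indicator_def elim!: AE_mp)
  then show "cum_inflow t0 tf u x \<le> cum_inflow t0 tf u y"
    using cum_inflow_increment[OF u xy] by simp
qed

lemma cum_inflow_increment_bound:
  assumes u: "L2_plus t0 tf u" and l: "l > 0"
  shows "\<bar>cum_inflow t0 tf u y - cum_inflow t0 tf u x\<bar>
     \<le> (LINT s:{t0..tf}|lborel. (u s)\<^sup>2) / (2*l) + l/2 * \<bar>y - x\<bar>"
proof -
  have ordered: "\<bar>cum_inflow t0 tf u y - cum_inflow t0 tf u x\<bar>
     \<le> (LINT s:{t0..tf}|lborel. (u s)\<^sup>2) / (2*l) + l/2 * (y - x)" if xy: "x \<le> y" for x y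
  proof -
    have "measure lborel ({x<..y} \<inter> {t0..tf}) \<le> y - x"
      using xy by (intro measure_subset_Icc_le) auto
    then have "l/2 * measure lborel ({x<..y} \<inter> {t0..tf}) \<le> l/2 * (y - x)"
      using l by simp
    moreover have "\<bar>LINT s:({x<..y} \<inter> {t0..tf})|lborel. u s\<bar>
        \<le> (LINT s:{t0..tf}|lborel. (u s)\<^sup>2) / (2*l) + l/2 * measure lborel ({x<..y} \<inter> {t0..tf})"
      using u l unfolding L2_plus_def by (intro set_integral_young_bound) auto
    ultimately show ?thesis
      using cum_inflow_increment[OF u xy] by linarith
  qed
  show ?thesis
  proof (cases "x \<le> y")
    case True
    then show ?thesis using ordered[of x y] by simp
  next
    case False
    then show ?thesis using ordered[of y x] by (simp add: abs_minus_commute)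
  qed
qed

(* Choosing l large, then |y - x| small, shows that U is uniformly continuous. *)
lemma cum_inflow_uniformly_continuous:
  assumes u: "L2_plus t0 tf u"
  shows "uniformly_continuous_on UNIV (cum_inflow t0 tf u)"
  unfolding uniformly_continuous_on_def dist_real_def
proof (intro allI impI)
  fix e :: real assume e: "e > 0"
  define A where "A = (LINT s:{t0..tf}|lborel. (u s)\<^sup>2)"
  have A: "A \<ge> 0"
    unfolding A_def set_lebesgue_integral_def by (intro integral_nonneg_AE) auto
  define l where "l = (A + 1) / e"
  have l: "l > 0" unfolding l_def using A e by simp
  have first: "A / (2*l) < e/2"
    unfolding l_def using A e by (simp add: field_simps)
  have "\<bar>cum_inflow t0 tf u x' - cum_inflow t0 tf u x\<bar> < e" if "\<bar>x' - x\<bar> < e / l" for x x'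
  proof -
    have "l/2 * \<bar>x' - x\<bar> < e/2" using that l by (simp add: field_simps)
    then show ?thesis
      using cum_inflow_increment_bound[OF u l, of x' x] first unfolding A_def by linarith
  qed
  moreover have "e / l > 0" using e l by simp
  ultimately show "\<exists>d>0. \<forall>x\<in>UNIV. \<forall>x'\<in>UNIV. \<bar>x' - x\<bar> < d \<longrightarrow>
      \<bar>cum_inflow t0 tf u x' - cum_inflow t0 tf u x\<bar> < e"
    by blast
qed

lemma cum_inflow_dist_bound:
  assumes u: "L2_plus t0 tf u" and v: "L2_plus t0 tf v" and l: "l > 0" and t0tf: "t0 \<le> tf"
  shows "\<bar>cum_inflow t0 tf v t - cum_inflow t0 tf u t\<bar>
     \<le> (L2_dist t0 tf v u)\<^sup>2 / (2*l) + l/2 * (tf - t0)"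
proof -
  have mu: "set_borel_measurable lborel {t0..tf} u" "set_integrable lborel {t0..tf} (\<lambda>s. (u s)\<^sup>2)"
    and mv: "set_borel_measurable lborel {t0..tf} v" "set_integrable lborel {t0..tf} (\<lambda>s. (v s)\<^sup>2)"
    using u v unfolding L2_plus_def by auto
  define S where "S = {t0..t} \<inter> {t0..tf}"
  have S: "S \<in> sets lborel" "S \<subseteq> {t0..tf}" unfolding S_def by auto
  have "cum_inflow t0 tf v t - cum_inflow t0 tf u t = (LINT s:S|lborel. v s - u s)"
    unfolding cum_inflow_def S_def[symmetric]
    using set_integrable_subset[OF L2_plus_integrable[OF v] S]
      set_integrable_subset[OF L2_plus_integrable[OF u] S]
    by (simp add: set_integral_diff(2))
  moreover have "\<bar>LINT s:S|lborel. v s - u s\<bar>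
      \<le> (LINT s:{t0..tf}|lborel. (v s - u s)\<^sup>2) / (2*l) + l/2 * measure lborel S"
    using set_borel_measurable_diff_power2(1)[OF mv(1) mu(1)] square_integrable_diff[OF mv(1) mu(1) mv(2) mu(2)]
    by (intro set_integral_young_bound[OF _ _ S l])
  moreover have "l/2 * measure lborel S \<le> l/2 * (tf - t0)"
    using measure_subset_Icc_le[OF S t0tf] l by simp
  moreover have "(L2_dist t0 tf v u)\<^sup>2 / (2*l) = (LINT s:{t0..tf}|lborel. (v s - u s)\<^sup>2) / (2*l)"
    unfolding L2_dist_def set_lebesgue_integral_def by (simp add: integral_nonneg_AE)
  ultimately show ?thesis
    by linarith
qed

lemma cum_inflow_uniform_limit:
  assumes us: "\<And>n. L2_plus t0 tf (us n)" and u: "L2_plus t0 tf u" and t0tf: "t0 < tf"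
    and lim: "(\<lambda>n. L2_dist t0 tf (us n) u) \<longlonglongrightarrow> 0"
  shows "uniform_limit UNIV (\<lambda>n. cum_inflow t0 tf (us n)) (cum_inflow t0 tf u) sequentially"
proof (rule uniform_limitI)
  fix e :: real assume e: "e > 0"
  define l where "l = e / (tf - t0)"
  have l: "l > 0" unfolding l_def using e t0tf by simp
  have "(\<lambda>n. (L2_dist t0 tf (us n) u)\<^sup>2) \<longlonglongrightarrow> 0"
    using tendsto_power[OF lim, of 2] by simp
  moreover have "e * l > 0" using e l by simp
  ultimately have "eventually (\<lambda>n. (L2_dist t0 tf (us n) u)\<^sup>2 < e * l) sequentially"
    by (rule order_tendstoD(2))
  then show "\<forall>\<^sub>F n in sequentially. \<forall>t\<in>UNIV.
      dist (cum_inflow t0 tf (us n) t) (cum_inflow t0 tf u t) < e"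
  proof (rule eventually_mono, intro ballI)
    fix n t assume small: "(L2_dist t0 tf (us n) u)\<^sup>2 < e * l"
    have "(L2_dist t0 tf (us n) u)\<^sup>2 / (2*l) < e/2"
      using small l by (simp add: field_simps)
    moreover have "l/2 * (tf - t0) = e/2" unfolding l_def using t0tf by (simp add: field_simps)
    ultimately show "dist (cum_inflow t0 tf (us n) t) (cum_inflow t0 tf u t) < e"
      using cum_inflow_dist_bound[OF u us l, of n t] t0tf by (simp add: dist_real_def)
  qed
qed

lemma arc_exit_before: "arc_dynamics \<alpha> \<beta> t0 U \<tau> V \<Longrightarrow> t < t0 \<Longrightarrow> \<tau> t = t + \<beta>"
  unfolding arc_dynamics_def by blast

lemma arc_exit_after:
  "arc_dynamics \<alpha> \<beta> t0 U \<tau> V \<Longrightarrow> t0 \<le> t \<Longrightarrow> \<tau> t = t + \<alpha> * (U t - V t) + \<beta>"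
  unfolding arc_dynamics_def by blast

lemma arc_fifo: "arc_dynamics \<alpha> \<beta> t0 U \<tau> V \<Longrightarrow> V (\<tau> t) = U t"
  unfolding arc_dynamics_def by blast

lemma arc_exit_continuous: "arc_dynamics \<alpha> \<beta> t0 U \<tau> V \<Longrightarrow> continuous_on UNIV \<tau>"
  unfolding arc_dynamics_def by blast

lemma arc_exit_strict_mono: "arc_dynamics \<alpha> \<beta> t0 U \<tau> V \<Longrightarrow> strict_mono \<tau>"
  unfolding arc_dynamics_def by blast

(* Vehicles never exit before they enter: a fixpoint tau(z) = z would force V(z) = U(z),
   i.e. an empty arc, and then tau(z) = z + beta. *)
lemma exit_time_gt:
  assumes arc: "arc_dynamics \<alpha> \<beta> t0 U \<tau> V" and \<beta>: "\<beta> > 0"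
  shows "x < \<tau> x"
proof (rule ccontr)
  assume "\<not> x < \<tau> x"
  then have nonpos: "\<tau> x - x \<le> 0" by simp
  have no_fixpoint: "\<tau> z \<noteq> z" for z
  proof (cases "z < t0")
    case True
    then show ?thesis using arc_exit_before[OF arc] \<beta> by simp
  next
    case False
    have "V z = U z" if "\<tau> z = z" using arc_fifo[OF arc, of z] that by simp
    then show ?thesis using arc_exit_after[OF arc] False \<beta> by fastforce
  qed
  have x_ge: "t0 - 1 \<le> x"
    using nonpos arc_exit_before[OF arc, of x] \<beta> by (cases "x < t0") auto
  have "continuous_on {t0 - 1..x} (\<lambda>y. \<tau> y - y)"
    using continuous_on_subset[OF arc_exit_continuous[OF arc]] by (intro continuous_intros) auto
  moreover have "0 \<le> \<tau> (t0 - 1) - (t0 - 1)"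
    using arc_exit_before[OF arc, of "t0 - 1"] \<beta> by simp
  ultimately obtain z where "\<tau> z - z = 0"
    using IVT2'[of "\<lambda>y. \<tau> y - y" x 0 "t0 - 1"] nonpos x_ge by blast
  then show False using no_fixpoint by simp
qed

lemma exit_time_surj:
  assumes arc: "arc_dynamics \<alpha> \<beta> t0 U \<tau> V" and \<beta>: "\<beta> > 0"
  obtains s where "\<tau> s = t" "s < t"
proof -
  define a where "a = min t t0 - \<beta>"
  have "\<tau> a \<le> t" "a \<le> t"
    unfolding a_def using arc_exit_before[OF arc, of "min t t0 - \<beta>"] \<beta> by auto
  moreover have "t \<le> \<tau> t" using exit_time_gt[OF arc \<beta>, of t] by simp
  moreover have "continuous_on {a..t} \<tau>"
    using continuous_on_subset[OF arc_exit_continuous[OF arc]] by simp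
  ultimately obtain s where "s \<le> t" "\<tau> s = t"
    using IVT'[of \<tau> a t t] by blast
  moreover have "s \<noteq> t" using exit_time_gt[OF arc \<beta>, of t] \<open>\<tau> s = t\<close> by auto
  ultimately show ?thesis using that by simp
qed

(* With nondecreasing cumulative inflow the arc volume is nonnegative, so the travel
   time is at least the free-flow time beta. *)
lemma exit_time_ge:
  assumes arc: "arc_dynamics \<alpha> \<beta> t0 U \<tau> V" and \<alpha>: "\<alpha> \<ge> 0" and \<beta>: "\<beta> > 0"
    and U: "mono U"
  shows "x + \<beta> \<le> \<tau> x"
proof (cases "x < t0")
  case True
  then show ?thesis using arc_exit_before[OF arc] by simp
next
  case False
  obtain s where s: "\<tau> s = x" "s < x" using exit_time_surj[OF arc \<beta>] .
  have "V x = U s" using arc_fifo[OF arc, of s] s by simp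
  then have "0 \<le> \<alpha> * (U x - V x)" using monoD[OF U, of s x] s \<alpha> by simp
  then show ?thesis using arc_exit_after[OF arc] False by simp
qed

lemma strict_mono_uniform_gap:
  fixes \<tau> :: "real \<Rightarrow> real"
  assumes cont: "continuous_on UNIV \<tau>" and mono: "strict_mono \<tau>" and \<epsilon>: "\<epsilon> > 0"
  obtains \<delta> where "\<delta> > 0" "\<And>x. x \<in> {a..T} \<Longrightarrow> \<delta> \<le> \<tau> (x + \<epsilon>) - \<tau> x \<and> \<delta> \<le> \<tau> x - \<tau> (x - \<epsilon>)"
proof (cases "a \<le> T")
  case False
  then show ?thesis using that[of 1] by simp
next
  case True
  define gap where "gap x = min (\<tau> (x + \<epsilon>) - \<tau> x) (\<tau> x - \<tau> (x - \<epsilon>))" for x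
  have cont_gap: "continuous_on {a..T} gap"
    unfolding gap_def
    by (intro continuous_intros continuous_on_compose2[OF cont]) (auto intro: continuous_on_subset)
  obtain x0 where x0: "x0 \<in> {a..T}" "\<forall>y\<in>{a..T}. gap x0 \<le> gap y"
    using continuous_attains_inf[OF compact_Icc _ cont_gap] True by auto
  show ?thesis
  proof (rule that)
    show "gap x0 > 0"
      unfolding gap_def using strict_monoD[OF mono, of x0 "x0 + \<epsilon>"] strict_monoD[OF mono, of "x0 - \<epsilon>" x0] \<epsilon>
      by simp
    fix x assume "x \<in> {a..T}"
    then show "gap x0 \<le> \<tau> (x + \<epsilon>) - \<tau> x \<and> gap x0 \<le> \<tau> x - \<tau> (x - \<epsilon>)"
      using x0(2) unfolding gap_def by simp
  qed
qed

lemma strict_mono_preimage_convergence: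
  fixes \<tau> :: "real \<Rightarrow> real" and \<tau>s :: "nat \<Rightarrow> real \<Rightarrow> real"
  assumes cont: "continuous_on UNIV \<tau>" and mono: "strict_mono \<tau>"
    and mono_n: "\<And>n. strict_mono (\<tau>s n)"
    and lim: "uniform_limit {..T} \<tau>s \<tau> sequentially" and \<epsilon>: "\<epsilon> > 0"
  shows "\<forall>\<^sub>F n in sequentially. \<forall>s s'. a \<le> s \<longrightarrow> s \<le> T \<longrightarrow> s' \<le> T \<longrightarrow>
           \<tau>s n s' = \<tau> s \<longrightarrow> \<bar>s' - s\<bar> \<le> \<epsilon>"
proof -
  obtain \<delta> where \<delta>: "\<delta> > 0"
    and gap: "\<And>x. x \<in> {a..T} \<Longrightarrow> \<delta> \<le> \<tau> (x + \<epsilon>) - \<tau> x \<and> \<delta> \<le> \<tau> x - \<tau> (x - \<epsilon>)"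
    using strict_mono_uniform_gap[OF cont mono \<epsilon>] by blast
  have "\<forall>\<^sub>F n in sequentially. \<forall>x\<in>{..T}. dist (\<tau>s n x) (\<tau> x) < \<delta>/2"
    by (rule uniform_limitD[OF lim]) (use \<delta> in simp)
  then show ?thesis
  proof (rule eventually_mono, intro allI impI)
    fix n s s'
    assume close: "\<forall>x\<in>{..T}. dist (\<tau>s n x) (\<tau> x) < \<delta>/2"
      and s: "a \<le> s" "s \<le> T" and s': "s' \<le> T" and eq: "\<tau>s n s' = \<tau> s"
    have gap_s: "\<delta> \<le> \<tau> (s + \<epsilon>) - \<tau> s \<and> \<delta> \<le> \<tau> s - \<tau> (s - \<epsilon>)"
      using gap s by simp
    show "\<bar>s' - s\<bar> \<le> \<epsilon>"
    proof (rule ccontr)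
      assume "\<not> \<bar>s' - s\<bar> \<le> \<epsilon>"
      then consider "s + \<epsilon> < s'" | "s' < s - \<epsilon>" by linarith
      then show False
      proof cases
        case 1
        then have "\<tau>s n (s + \<epsilon>) < \<tau>s n s'" "s + \<epsilon> \<le> T"
          using strict_monoD[OF mono_n] s' by auto
        moreover from this(2) have "\<bar>\<tau>s n (s + \<epsilon>) - \<tau> (s + \<epsilon>)\<bar> < \<delta>/2"
          using close by (simp add: dist_real_def)
        ultimately show False
          using gap_s eq by linarith
      next
        case 2
        then have "\<tau>s n s' < \<tau>s n (s - \<epsilon>)" "s - \<epsilon> \<le> T"
          using strict_monoD[OF mono_n] s \<epsilon> by auto
        moreover from this(2) have "\<bar>\<tau>s n (s - \<epsilon>) - \<tau> (s - \<epsilon>)\<bar> < \<delta>/2"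
          using close by (simp add: dist_real_def)
        ultimately show False
          using gap_s eq by linarith
      qed
    qed
  qed
qed

locale converging_arcs =
  fixes \<alpha> \<beta> t0 :: real
    and Us \<tau>s Vs :: "nat \<Rightarrow> real \<Rightarrow> real" and U \<tau> V :: "real \<Rightarrow> real"
  assumes \<alpha>: "\<alpha> \<ge> 0" and \<beta>: "\<beta> > 0"
    and arcs: "\<And>n. arc_dynamics \<alpha> \<beta> t0 (Us n) (\<tau>s n) (Vs n)"
    and arc: "arc_dynamics \<alpha> \<beta> t0 U \<tau> V"
    and mono_Us: "\<And>n. mono (Us n)" and mono_U: "mono U"
    and inflow_limit: "uniform_limit UNIV Us U sequentially"
    and inflow_ucont: "uniformly_continuous_on UNIV U"
begin

(* Before t0 all exit times equal t + beta. *)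
lemma exit_time_limit_before: "uniform_limit {..<t0} \<tau>s \<tau> sequentially"
  using uniform_limit_const[where S="{..<t0}" and c=\<tau> and f=sequentially]
  by (rule uniform_limit_cong'[THEN iffD1, rotated 2])
    (simp_all add: arc_exit_before[OF arcs] arc_exit_before[OF arc])

(* Convergence of exit times up to T gives convergence of exit counts up to T + beta:
   V(t) = U(s) and Vs n t = Us n s' with tau(s) = tau_n(s') = t, where s, s' <= T because
   every travel time is at least beta, and s' is close to s by preimage convergence. *)
lemma exit_count_limit:
  assumes lim: "uniform_limit {..T} \<tau>s \<tau> sequentially"
  shows "uniform_limit {t0..T + \<beta>} Vs V sequentially"
proof (rule uniform_limitI)
  fix e :: real assume e: "e > 0"
  then obtain d where d: "d > 0" and ucont: "\<And>x y. \<bar>y - x\<bar> < d \<Longrightarrow> \<bar>U y - U x\<bar> < e/2"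
    using inflow_ucont unfolding uniformly_continuous_on_def dist_real_def
    by (metis UNIV_I half_gt_zero)
  have "\<forall>\<^sub>F n in sequentially. \<forall>t\<in>UNIV. dist (Us n t) (U t) < e/2"
    by (rule uniform_limitD[OF inflow_limit]) (use e in simp)
  moreover have "\<forall>\<^sub>F n in sequentially. \<forall>s s'. t0 - \<beta> \<le> s \<longrightarrow> s \<le> T \<longrightarrow> s' \<le> T \<longrightarrow>
      \<tau>s n s' = \<tau> s \<longrightarrow> \<bar>s' - s\<bar> \<le> d/2"
    using arc_exit_continuous[OF arc] arc_exit_strict_mono[OF arc] arc_exit_strict_mono[OF arcs] lim d
    by (intro strict_mono_preimage_convergence) auto
  ultimately show "\<forall>\<^sub>F n in sequentially. \<forall>t\<in>{t0..T + \<beta>}. dist (Vs n t) (V t) < e"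
  proof eventually_elim
    case (elim n)
    show ?case
    proof
      fix t assume t: "t \<in> {t0..T + \<beta>}"
      obtain s where s: "\<tau> s = t" "s < t" using exit_time_surj[OF arc \<beta>] .
      obtain s' where s': "\<tau>s n s' = t" "s' < t" using exit_time_surj[OF arcs \<beta>] .
      have "s \<le> T" using exit_time_ge[OF arc \<alpha> \<beta> mono_U, of s] s t by simp
      moreover have "s' \<le> T" using exit_time_ge[OF arcs[of n] \<alpha> \<beta> mono_Us[of n], of s'] s' t by simp
      moreover have "t0 - \<beta> \<le> s"
        using arc_exit_before[OF arc, of s] s t \<beta> by (cases "s < t0") auto
      ultimately have "\<bar>U s' - U s\<bar> < e/2"
        using elim(2) s s' d by (intro ucont) force
      moreover have "\<bar>Us n s' - U s'\<bar> < e/2" using elim(1) by (simp add: dist_real_def)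
      moreover have "Vs n t = Us n s'" "V t = U s"
        using arc_fifo[OF arcs, of n s'] arc_fifo[OF arc, of s] s s' by simp_all
      ultimately show "dist (Vs n t) (V t) < e" unfolding dist_real_def by linarith
    qed
  qed
qed

(* Conversely, convergent exit counts on [t0,T] give convergent exit times up to T,
   because tau(t) = t + alpha (U(t) - V(t)) + beta there. *)
lemma exit_time_limit_extend:
  assumes lim: "uniform_limit {t0..T} Vs V sequentially"
  shows "uniform_limit {..T} \<tau>s \<tau> sequentially"
proof -
  have "uniform_limit {t0..T} (\<lambda>n t. t + \<alpha> * (Us n t - Vs n t) + \<beta>) (\<lambda>t. t + \<alpha> * (U t - V t) + \<beta>) sequentially"
    using uniform_limit_on_subset[OF inflow_limit] lim by (intro uniform_limit_intros) auto
  then have "uniform_limit {t0..T} \<tau>s \<tau> sequentially"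
    by (rule uniform_limit_cong'[THEN iffD1, rotated 2])
      (simp_all add: arc_exit_after[OF arcs] arc_exit_after[OF arc])
  then have "uniform_limit ({..<t0} \<union> {t0..T}) \<tau>s \<tau> sequentially"
    by (rule uniform_limit_on_Un[OF exit_time_limit_before])
  then show ?thesis by (rule uniform_limit_on_subset) auto
qed

lemma exit_time_limit_below: "uniform_limit {..t0 - \<beta> + real k * \<beta>} \<tau>s \<tau> sequentially"
proof (induction k)
  case 0
  show ?case by (rule uniform_limit_on_subset[OF exit_time_limit_before]) (use \<beta> in auto)
next
  case (Suc k)
  have "uniform_limit {..(t0 - \<beta> + real k * \<beta>) + \<beta>} \<tau>s \<tau> sequentially"
    using exit_count_limit[OF Suc.IH] by (intro exit_time_limit_extend)
  then show ?case by (simp add: algebra_simps)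
qed

end

theorem mainTheorem2:
  fixes \<alpha> \<beta> t0 tf :: real
    and us :: "nat \<Rightarrow> real \<Rightarrow> real" and u :: "real \<Rightarrow> real"
    and \<tau>s Vs :: "nat \<Rightarrow> real \<Rightarrow> real" and \<tau> V :: "real \<Rightarrow> real"
  assumes "\<alpha> \<ge> 0" and "\<beta> > 0" and "t0 < tf"
    and "\<And>n. L2_plus t0 tf (us n)" and "L2_plus t0 tf u"
    and "(\<lambda>n. L2_dist t0 tf (us n) u) \<longlonglongrightarrow> 0"
    and "\<And>n. arc_dynamics \<alpha> \<beta> t0 (cum_inflow t0 tf (us n)) (\<tau>s n) (Vs n)"
    and "arc_dynamics \<alpha> \<beta> t0 (cum_inflow t0 tf u) \<tau> V"
  shows "uniform_limit {t0..tf} (\<lambda>n. cum_inflow t0 tf (us n)) (cum_inflow t0 tf u) sequentially \<and>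
           uniform_limit {t0..tf} \<tau>s \<tau> sequentially \<and>
           uniform_limit {t0..tf} Vs V sequentially"
proof -
  interpret converging_arcs \<alpha> \<beta> t0 "\<lambda>n. cum_inflow t0 tf (us n)" \<tau>s Vs "cum_inflow t0 tf u" \<tau> V
    using assms by unfold_locales
      (simp_all add: cum_inflow_mono cum_inflow_uniform_limit cum_inflow_uniformly_continuous)
  obtain k :: nat where "(tf - t0 + \<beta>) / \<beta> < real k"
    using reals_Archimedean2 by blast
  then have horizon: "tf \<le> t0 - \<beta> + real k * \<beta>"
    using \<open>\<beta> > 0\<close> by (simp add: divide_less_eq)
  have exit_times: "uniform_limit {..t0 - \<beta> + real k * \<beta>} \<tau>s \<tau> sequentially"
    by (rule exit_time_limit_below)
  have exit_counts: "uniform_limit {t0..(t0 - \<beta> + real k * \<beta>) + \<beta>} Vs V sequentially"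
    by (rule exit_count_limit[OF exit_times])
  show ?thesis
    using uniform_limit_on_subset[OF inflow_limit, of "{t0..tf}"]
      uniform_limit_on_subset[OF exit_times, of "{t0..tf}"]
      uniform_limit_on_subset[OF exit_counts, of "{t0..tf}"] horizon \<open>\<beta> > 0\<close>
    by auto
qed

end
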